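(* Let $a<b$, $\alpha>0$, $m=\frac{a+b}{2}$. Let $h:[a,b]\to\mathbb{R}$ be strictly increasing and continuously differentiable. Let $f$ be differentiable on an open interval $I\supseteq[h(a),h(b)]$ with $f'$ integrable on $[h(a),h(b)]$ and $|f'|$ convex on $[h(a),h(b)]$, and let $g:[a,b]\to\mathbb{R}$ be continuous. Put $D=h(b)-h(a)$, $U=h(m)-h(a)$, $V=h(b)-h(m)$. Then $$\Big|f(h(m))\Big[(J^{\alpha}_{m^-,h}g)(a)+(J^{\alpha}_{m^+,h}g)(b)\Big]-\Big[(J^{\alpha}_{m^-,h}(g\cdot(f\circ h)))(a)+(J^{\alpha}_{m^+,h}(g\cdot(f\circ h)))(b)\Big]\Big|$$ $$\le \frac{\|g\|_{\infty,[a,m]}}{D\,\Gamma(\alpha+1)}\Big\{|f'(h(a))|\Big[\frac{D\,U^{\alpha+1}}{\alpha+1}-\frac{U^{\alpha+2}}{\alpha+2}\Big]+|f'(h(b))|\frac{U^{\alpha+2}}{\alpha+2}\Big\}$$ $$+\frac{\|g\|_{\infty,[m,b]}}{D\,\Gamma(\alpha+1)}\Big\{|f'(h(b))|\Big[\frac{D\,V^{\alpha+1}}{\alpha+1}-\frac{V^{\alpha+2}}{\alpha+2}\Big]+|f'(h(a))|\frac{V^{\alpha+2}}{\alpha+2}\Big\}.$$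
   Context: Generalized fractional integrals with respect to $h$: for $c<d$ in $[a,b]$ and integrable $\varphi$, $(J^{\alpha}_{c^+,h}\varphi)(x)=\frac{1}{\Gamma(\alpha)}\int_c^x (h(x)-h(t))^{\alpha-1}h'(t)\varphi(t)\,dt$ for $x\in(c,d]$, and $(J^{\alpha}_{d^-,h}\varphi)(x)=\frac{1}{\Gamma(\alpha)}\int_x^d (h(t)-h(x))^{\alpha-1}h'(t)\varphi(t)\,dt$ for $x\in[c,d)$. Thus $(J^{\alpha}_{m^-,h}\varphi)(a)=\frac{1}{\Gamma(\alpha)}\int_a^m (h(t)-h(a))^{\alpha-1}h'(t)\varphi(t)\,dt$ and $(J^{\alpha}_{m^+,h}\varphi)(b)=\frac{1}{\Gamma(\alpha)}\int_m^b (h(b)-h(t))^{\alpha-1}h'(t)\varphi(t)\,dt$. $g\cdot(f\circ h)$ denotes $t\mapsto g(t)f(h(t))$. For a subinterval $J\subseteq[a,b]$, $\|g\|_{\infty,J}=\sup_{t\in J}|g(t)|$. *)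

theory Defs
  imports "HOL-Analysis.Analysis"
begin

text \<open>Generalized fractional integrals with respect to h (h' is the derivative of h).\<close>

definition frac_left :: "real \<Rightarrow> (real \<Rightarrow> real) \<Rightarrow> (real \<Rightarrow> real) \<Rightarrow> real \<Rightarrow> (real \<Rightarrow> real) \<Rightarrow> real \<Rightarrow> real"
  where "frac_left \<alpha> h h' c \<phi> x =
    (1 / Gamma \<alpha>) * integral {c..x} (\<lambda>t. (h x - h t) powr (\<alpha> - 1) * h' t * \<phi> t)"
  \<comment> \<open>J^alpha_{c+,h} phi at x\<close>

definition frac_right :: "real \<Rightarrow> (real \<Rightarrow> real) \<Rightarrow> (real \<Rightarrow> real) \<Rightarrow> real \<Rightarrow> (real \<Rightarrow> real) \<Rightarrow> real \<Rightarrow> real"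
  where "frac_right \<alpha> h h' d \<phi> x =
    (1 / Gamma \<alpha>) * integral {x..d} (\<lambda>t. (h t - h x) powr (\<alpha> - 1) * h' t * \<phi> t)"
  \<comment> \<open>J^alpha_{d-,h} phi at x\<close>

definition sup_norm_on :: "(real \<Rightarrow> real) \<Rightarrow> real set \<Rightarrow> real"
  where "sup_norm_on g J = Sup ((\<lambda>t. \<bar>g t\<bar>) ` J)"

end

theory Submission
  imports Defs
begin

text \<open>
  On [a, m] the left-hand quantity is the fractional integral
  of g t (f (h m) - f (h t)), with the nonnegative kernel (h t - h a)^(\<alpha>-1) h' t. By convexity
  |f'| lies below its chord over [h a, h b], so |f (h m) - f (h t)| is at most the integral of that
  chord from h t to h m. Integrating this bound against the kernel is an explicit computation in the
  variable u = h t - h a and gives the first brace of the right-hand side. The half [m, b] is the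
  mirror image of the first one under t \<mapsto> -t.
\<close>

text \<open>In the variable w = s - h a, with D = h b - h a, the derivative of
  chord_integral |f' (h a)| |f' (h b)| D is the chord of |f'| over [h a, h b], and
  weighted_chord_integral \<alpha> A B D w is the integral of
  u powr (\<alpha> - 1) * (chord_integral A B D w - chord_integral A B D u) over [0, w].\<close>

definition chord_integral :: "real \<Rightarrow> real \<Rightarrow> real \<Rightarrow> real \<Rightarrow> real" where
  "chord_integral A B D w = (A * (D * w - w\<^sup>2 / 2) + B * w\<^sup>2 / 2) / D"

definition weighted_chord_integral :: "real \<Rightarrow> real \<Rightarrow> real \<Rightarrow> real \<Rightarrow> real \<Rightarrow> real" where
  "weighted_chord_integral \<alpha> A B D w =
    (A * (D * w powr (\<alpha> + 1) / (\<alpha> + 1) - w powr (\<alpha> + 2) / (\<alpha> + 2)) + B * (w powr (\<alpha> + 2) / (\<alpha> + 2)))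
      / (\<alpha> * D)"

lemma chord_integral_deriv:
  assumes "D \<noteq> 0"
  shows "(chord_integral A B D has_real_derivative (A * (D - w) + B * w) / D) (at w)"
  unfolding chord_integral_def using assms
  by (auto intro!: derivative_eq_intros simp: field_simps power2_eq_square)

lemma chord_integral_flip:
  assumes "D \<noteq> 0"
  shows "chord_integral B A D (D - x) - chord_integral B A D (D - y)
       = chord_integral A B D y - chord_integral A B D x"
  using assms by (simp add: chord_integral_def field_simps power2_eq_square)

lemma weighted_chord_integral_deriv:
  assumes "w > 0" "\<alpha> > 0" "D \<noteq> 0"
  shows "(weighted_chord_integral \<alpha> A B D has_real_derivative
           (A * (D * w powr \<alpha> - w powr (\<alpha> + 1)) + B * w powr (\<alpha> + 1)) / (\<alpha> * D)) (at w)"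
proof -
  have "((\<lambda>w. w powr (\<alpha> + k)) has_real_derivative (\<alpha> + k) * w powr (\<alpha> + k - 1)) (at w)" for k
    using has_real_derivative_powr[OF assms(1)] by simp
  from this[of 1] this[of 2] assms show ?thesis
    unfolding weighted_chord_integral_def
    by (auto intro!: derivative_eq_intros simp: add.commute add.left_commute)
qed

lemma weighted_chord_primitive_deriv:
  assumes "w > 0" "\<alpha> > 0" "D \<noteq> 0"
  shows "((\<lambda>w. w powr \<alpha> / \<alpha> * (chord_integral A B D U - chord_integral A B D w)
                + weighted_chord_integral \<alpha> A B D w)
           has_real_derivative w powr (\<alpha> - 1) * (chord_integral A B D U - chord_integral A B D w)) (at w)"
proof -
  have "w powr (\<alpha> + 1) = w powr \<alpha> * w" "w powr \<alpha> = w powr (\<alpha> - 1) * w"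
    using assms powr_add[of w "\<alpha> - 1" 1] by (simp_all add: powr_add)
  then show ?thesis using assms
    by (auto intro!: derivative_eq_intros chord_integral_deriv weighted_chord_integral_deriv
        has_real_derivative_powr simp: field_simps)
qed

lemma continuous_on_powr_nonneg:
  "c > 0 \<Longrightarrow> continuous_on {0..} (\<lambda>w::real. w powr c)"
  by (rule continuous_on_powr'[OF continuous_on_id continuous_on_const]) auto

lemma weighted_chord_primitive_continuous:
  assumes "\<alpha> > 0" "D \<noteq> 0"
  shows "continuous_on {0..} (\<lambda>w. w powr \<alpha> / \<alpha> * (chord_integral A B D U - chord_integral A B D w)
                                  + weighted_chord_integral \<alpha> A B D w)"
  unfolding chord_integral_def weighted_chord_integral_def using assms
  by (intro continuous_on_add continuous_on_mult continuous_on_diff continuous_on_divide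
      continuous_on_const continuous_on_power continuous_on_id continuous_on_powr_nonneg) auto

lemma weighted_chord_integral_Gamma:
  assumes "\<alpha> > 0"
  shows "M * weighted_chord_integral \<alpha> A B D W / Gamma \<alpha> = M / (D * Gamma (\<alpha> + 1)) *
    (A * (D * W powr (\<alpha> + 1) / (\<alpha> + 1) - W powr (\<alpha> + 2) / (\<alpha> + 2)) + B * (W powr (\<alpha> + 2) / (\<alpha> + 2)))"
proof -
  have "Gamma (\<alpha> + 1) = \<alpha> * Gamma \<alpha>"
    using assms by (intro Gamma_plus1) (auto elim!: nonpos_Ints_cases)
  moreover have "Gamma \<alpha> > 0" using assms by simp
  ultimately show ?thesis
    unfolding weighted_chord_integral_def using assms by (simp add: field_simps)
qed

lemma abs_diff_le_majorant_diff:
  fixes f f' \<Phi> L :: "real \<Rightarrow> real"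
  assumes "x \<le> y"
    and f: "\<And>s. s \<in> {x..y} \<Longrightarrow> (f has_real_derivative f' s) (at s)"
    and \<Phi>: "\<And>s. s \<in> {x..y} \<Longrightarrow> (\<Phi> has_real_derivative L s) (at s)"
    and majorant: "\<And>s. s \<in> {x..y} \<Longrightarrow> \<bar>f' s\<bar> \<le> L s"
  shows "\<bar>f y - f x\<bar> \<le> \<Phi> y - \<Phi> x"
proof -
  have "\<Phi> x + \<sigma> * f x \<le> \<Phi> y + \<sigma> * f y" if "\<bar>\<sigma>\<bar> = 1" for \<sigma>
  proof (rule DERIV_nonneg_imp_nondecreasing[OF \<open>x \<le> y\<close>])
    fix s assume "x \<le> s" "s \<le> y"
    then have "((\<lambda>s. \<Phi> s + \<sigma> * f s) has_real_derivative L s + \<sigma> * f' s) (at s)"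
              "L s + \<sigma> * f' s \<ge> 0"
      using \<Phi> f majorant[of s] that by (auto intro!: derivative_eq_intros simp: abs_if split: if_splits)
    then show "\<exists>z. ((\<lambda>s. \<Phi> s + \<sigma> * f s) has_real_derivative z) (at s) \<and> z \<ge> 0" by blast
  qed
  from this[of 1] this[of "-1"] show ?thesis by linarith
qed

lemma abs_diff_le_chord_integral:
  fixes f :: "real \<Rightarrow> real"
  assumes "p < q"
    and f_diff: "\<And>s. s \<in> {p..q} \<Longrightarrow> f differentiable (at s)"
    and convex: "convex_on {p..q} (\<lambda>s. \<bar>deriv f s\<bar>)"
    and "p \<le> x" "x \<le> y" "y \<le> q"
  shows "\<bar>f y - f x\<bar> \<le> chord_integral \<bar>deriv f p\<bar> \<bar>deriv f q\<bar> (q - p) (y - p)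
                       - chord_integral \<bar>deriv f p\<bar> \<bar>deriv f q\<bar> (q - p) (x - p)"
proof (rule abs_diff_le_majorant_diff[OF \<open>x \<le> y\<close>])
  let ?A = "\<bar>deriv f p\<bar>" and ?B = "\<bar>deriv f q\<bar>"
  fix s assume "s \<in> {x..y}"
  then have s: "s \<in> {p..q}" using assms by auto
  show "(f has_real_derivative deriv f s) (at s)"
    using f_diff[OF s] by (simp add: DERIV_deriv_iff_real_differentiable)
  show "((\<lambda>s. chord_integral ?A ?B (q - p) (s - p)) has_real_derivative
          (?A * ((q - p) - (s - p)) + ?B * (s - p)) / (q - p)) (at s)"
  proof -
    have "((\<lambda>s. s - p) has_real_derivative 1) (at s)"
      by (auto intro!: derivative_eq_intros)
    from DERIV_chain2[OF chord_integral_deriv[of "q - p" ?A ?B] this] \<open>p < q\<close> show ?thesis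
      by simp
  qed
  show "\<bar>deriv f s\<bar> \<le> (?A * ((q - p) - (s - p)) + ?B * (s - p)) / (q - p)"
    using convex_onD_Icc'[OF convex s] \<open>p < q\<close> by (simp add: field_simps)
qed

lemma abs_comp_diff_le_chord_integral:
  fixes f h :: "real \<Rightarrow> real"
  assumes "a < b" and h_mono: "strict_mono_on {a..b} h"
    and f_diff: "\<And>s. s \<in> {h a..h b} \<Longrightarrow> f differentiable (at s)"
    and "convex_on {h a..h b} (\<lambda>s. \<bar>deriv f s\<bar>)"
    and "s \<in> {a..b}" "t \<in> {a..b}" "s \<le> t"
  shows "\<bar>f (h t) - f (h s)\<bar>
    \<le> chord_integral \<bar>deriv f (h a)\<bar> \<bar>deriv f (h b)\<bar> (h b - h a) (h t - h a)
      - chord_integral \<bar>deriv f (h a)\<bar> \<bar>deriv f (h b)\<bar> (h b - h a) (h s - h a)"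
  using assms strict_mono_on_leD[OF h_mono]
  by (intro abs_diff_le_chord_integral[OF strict_mono_onD[OF h_mono] f_diff]) auto

lemma deriv_nonneg_if_strict_mono_on:
  fixes h :: "real \<Rightarrow> real"
  assumes "strict_mono_on {a..b} h" "t \<in> {a<..<b}" "(h has_real_derivative h') (at t)"
  shows "h' \<ge> 0"
proof (rule ccontr)
  assume "\<not> h' \<ge> 0"
  then obtain d where "d > 0" and dec: "\<And>e. e > 0 \<Longrightarrow> e < d \<Longrightarrow> h (t + e) < h t"
    using DERIV_neg_dec_right[OF assms(3)] by force
  define e where "e = min (d / 2) (b - t)"
  have "e > 0" "e < d" "t + e \<le> b"
    using \<open>d > 0\<close> assms(2) by (auto simp: e_def min_def)
  then have "h t < h (t + e)"
    using assms(2) by (intro strict_mono_onD[OF assms(1)]) auto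
  with dec[OF \<open>e > 0\<close> \<open>e < d\<close>] show False by simp
qed

lemma has_integral_comp_primitive:
  fixes u u' G G' :: "real \<Rightarrow> real"
  assumes "a \<le> b" "continuous_on {a..b} u"
    and u': "\<And>t. t \<in> {a<..<b} \<Longrightarrow> (u has_real_derivative u' t) (at t)"
    and "continuous_on (u ` {a..b}) G"
    and G': "\<And>t. t \<in> {a<..<b} \<Longrightarrow> (G has_real_derivative G' (u t)) (at (u t))"
  shows "((\<lambda>t. G' (u t) * u' t) has_integral G (u b) - G (u a)) {a..b}"
proof (rule fundamental_theorem_of_calculus_interior[OF assms(1)])
  show "continuous_on {a..b} (\<lambda>t. G (u t))"
    using continuous_on_compose[OF assms(2,4)] by (simp add: comp_def)
  fix t assume "t \<in> {a<..<b}"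
  then show "((\<lambda>t. G (u t)) has_vector_derivative G' (u t) * u' t) (at t)"
    using DERIV_chain2[OF G' u'] by (simp add: has_real_derivative_iff_has_vector_derivative)
qed

lemma sup_norm_on_bound:
  assumes "continuous_on {c..d} g" "t \<in> {c..d}"
  shows "\<bar>g t\<bar> \<le> sup_norm_on g {c..d}"
proof -
  have "bounded ((\<lambda>t. \<bar>g t\<bar>) ` {c..d})"
    using assms(1) by (intro compact_imp_bounded compact_continuous_image continuous_intros) auto
  then show ?thesis
    unfolding sup_norm_on_def using assms(2) by (intro cSup_upper bounded_imp_bdd_above) auto
qed

lemma integrable_kernel_mult:
  fixes K \<phi> :: "real \<Rightarrow> real"
  assumes K_int: "K integrable_on {a..b}" and K_cont: "continuous_on {a<..<b} K"
    and K_nonneg: "\<And>t. t \<in> {a<..<b} \<Longrightarrow> K t \<ge> 0" and \<phi>_cont: "continuous_on {a..b} \<phi>"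
  shows "(\<lambda>t. K t * \<phi> t) integrable_on {a..b}"
proof -
  have "bounded (\<phi> ` {a..b})"
    using \<phi>_cont by (intro compact_imp_bounded compact_continuous_image) auto
  then obtain C where C: "\<And>t. t \<in> {a..b} \<Longrightarrow> \<bar>\<phi> t\<bar> \<le> C"
    unfolding bounded_real by blast
  have "(\<lambda>t. K t * \<phi> t) integrable_on {a<..<b}"
  proof (rule measurable_bounded_by_integrable_imp_integrable_real)
    show "(\<lambda>t. K t * \<phi> t) \<in> borel_measurable (lebesgue_on {a<..<b})"
      using K_cont continuous_on_subset[OF \<phi>_cont greaterThanLessThan_subseteq_atLeastAtMost_iff[THEN iffD2]]
      by (intro continuous_imp_measurable_on_sets_lebesgue continuous_intros) auto
    show "(\<lambda>t. C * K t) integrable_on {a<..<b}"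
      using integrable_on_cmult_left[OF K_int, of C] by (simp add: integrable_on_Icc_iff_Ioo[symmetric])
    fix t assume "t \<in> {a<..<b}"
    then have "\<bar>\<phi> t\<bar> * K t \<le> C * K t" "K t \<ge> 0"
      using C K_nonneg by (auto intro: mult_right_mono)
    then show "\<bar>K t * \<phi> t\<bar> \<le> C * K t"
      by (simp add: abs_mult mult.commute)
  qed auto
  then show ?thesis by (simp add: integrable_on_Icc_iff_Ioo)
qed

lemma frac_left_reflect:
  "frac_left \<alpha> h h' m \<phi> b = frac_right \<alpha> (\<lambda>s. - h (- s)) (\<lambda>s. h' (- s)) (- m) (\<lambda>s. \<phi> (- s)) (- b)"
  using Henstock_Kurzweil_Integration.integral_reflect_real[of b m "\<lambda>t. (h b - h t) powr (\<alpha> - 1) * h' t * \<phi> t"]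
  by (simp add: frac_left_def frac_right_def)

lemma frac_right_kernel_has_integral:
  fixes h h' :: "real \<Rightarrow> real"
  assumes "a < m" and \<alpha>: "\<alpha> > 0" and "D \<noteq> 0"
    and h_mono: "strict_mono_on {a..m} h" and h_cont: "continuous_on {a..m} h"
    and h_deriv: "\<And>t. t \<in> {a<..<m} \<Longrightarrow> (h has_real_derivative h' t) (at t)"
  shows "((\<lambda>t. (h t - h a) powr (\<alpha> - 1) * h' t) has_integral (h m - h a) powr \<alpha> / \<alpha>) {a..m}"
    and "((\<lambda>t. (h t - h a) powr (\<alpha> - 1) * h' t
                 * (chord_integral A B D (h m - h a) - chord_integral A B D (h t - h a)))
           has_integral weighted_chord_integral \<alpha> A B D (h m - h a)) {a..m}"
proof -
  let ?P = "chord_integral A B D"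
  have h_pos: "h t - h a > 0" if "t \<in> {a<..m}" for t
    using that \<open>a < m\<close> strict_mono_onD[OF h_mono, of a t] by auto
  have "h t - h a \<ge> 0" if "t \<in> {a..m}" for t
    using that h_pos[of t] by (cases "t = a") auto
  then have shifted_h: "continuous_on {a..m} (\<lambda>t. h t - h a)" "(\<lambda>t. h t - h a) ` {a..m} \<subseteq> {0..}"
    "\<And>t. t \<in> {a<..<m} \<Longrightarrow> ((\<lambda>t. h t - h a) has_real_derivative h' t) (at t)"
    using h_cont h_deriv by (auto intro: continuous_on_diff continuous_on_const intro!: derivative_eq_intros)
  have "((\<lambda>t. (h t - h a) powr (\<alpha> - 1) * h' t)
          has_integral (h m - h a) powr \<alpha> / \<alpha> - (h a - h a) powr \<alpha> / \<alpha>) {a..m}"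
  proof (rule has_integral_comp_primitive[OF _ shifted_h(1) shifted_h(3)])
    show "continuous_on ((\<lambda>t. h t - h a) ` {a..m}) (\<lambda>w. w powr \<alpha> / \<alpha>)"
      using continuous_on_subset[OF continuous_on_powr_nonneg[OF \<alpha>] shifted_h(2)] \<alpha>
      by (intro continuous_on_divide continuous_on_const) auto
  qed (use \<open>a < m\<close> h_pos \<alpha> in \<open>auto intro!: derivative_eq_intros\<close>)
  then show "((\<lambda>t. (h t - h a) powr (\<alpha> - 1) * h' t) has_integral (h m - h a) powr \<alpha> / \<alpha>) {a..m}"
    by simp
  let ?G = "\<lambda>w. w powr \<alpha> / \<alpha> * (?P (h m - h a) - ?P w) + weighted_chord_integral \<alpha> A B D w"
  have "((\<lambda>t. (h t - h a) powr (\<alpha> - 1) * (?P (h m - h a) - ?P (h t - h a)) * h' t)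
          has_integral ?G (h m - h a) - ?G (h a - h a)) {a..m}"
  proof (rule has_integral_comp_primitive[OF _ shifted_h(1) shifted_h(3) _ weighted_chord_primitive_deriv])
    show "continuous_on ((\<lambda>t. h t - h a) ` {a..m}) ?G"
      by (rule continuous_on_subset[OF weighted_chord_primitive_continuous[OF \<alpha> \<open>D \<noteq> 0\<close>] shifted_h(2)])
  qed (use \<open>a < m\<close> h_pos \<alpha> \<open>D \<noteq> 0\<close> in auto)
  then show "((\<lambda>t. (h t - h a) powr (\<alpha> - 1) * h' t * (?P (h m - h a) - ?P (h t - h a)))
           has_integral weighted_chord_integral \<alpha> A B D (h m - h a)) {a..m}"
    using \<alpha> by (simp add: weighted_chord_integral_def mult_ac)
qed

lemma frac_right_cmult:
  "c * frac_right \<alpha> h h' d \<phi> x = frac_right \<alpha> h h' d (\<lambda>t. c * \<phi> t) x"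
  by (simp add: frac_right_def mult_ac)

lemma frac_right_diff:
  assumes "(\<lambda>t. (h t - h x) powr (\<alpha> - 1) * h' t * \<phi> t) integrable_on {x..d}"
    and "(\<lambda>t. (h t - h x) powr (\<alpha> - 1) * h' t * \<psi> t) integrable_on {x..d}"
  shows "frac_right \<alpha> h h' d \<phi> x - frac_right \<alpha> h h' d \<psi> x = frac_right \<alpha> h h' d (\<lambda>t. \<phi> t - \<psi> t) x"
  using integral_diff[OF assms] by (simp add: frac_right_def right_diff_distrib)

lemma abs_frac_right_le:
  fixes h h' \<phi> \<psi> :: "real \<Rightarrow> real"
  assumes \<alpha>: "\<alpha> > 0"
    and K_nonneg: "\<And>t. t \<in> {a<..<m} \<Longrightarrow> (h t - h a) powr (\<alpha> - 1) * h' t \<ge> 0"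
    and \<phi>_int: "(\<lambda>t. (h t - h a) powr (\<alpha> - 1) * h' t * \<phi> t) integrable_on {a..m}"
    and \<psi>_int: "((\<lambda>t. (h t - h a) powr (\<alpha> - 1) * h' t * \<psi> t) has_integral I) {a..m}"
    and \<phi>_le: "\<And>t. t \<in> {a<..<m} \<Longrightarrow> \<bar>\<phi> t\<bar> \<le> M * \<psi> t"
  shows "\<bar>frac_right \<alpha> h h' m \<phi> a\<bar> \<le> M * I / Gamma \<alpha>"
proof -
  define K where "K t = (h t - h a) powr (\<alpha> - 1) * h' t" for t
  have K\<psi>: "((\<lambda>t. M * (K t * \<psi> t)) has_integral M * I) {a<..<m}"
    using has_integral_mult_right[OF \<psi>_int] by (simp add: K_def has_integral_Icc_iff_Ioo)
  have "\<bar>K t * \<phi> t\<bar> \<le> M * (K t * \<psi> t)" if "t \<in> {a<..<m}" for t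
  proof -
    have K: "K t \<ge> 0"
      using K_nonneg[OF that] by (simp add: K_def)
    have "K t * \<bar>\<phi> t\<bar> \<le> K t * (M * \<psi> t)"
      by (rule mult_left_mono[OF \<phi>_le[OF that] K])
    then show ?thesis
      by (simp add: abs_mult abs_of_nonneg[OF K] mult.left_commute)
  qed
  moreover have "(\<lambda>t. K t * \<phi> t) integrable_on {a<..<m}"
    using \<phi>_int integrable_on_Icc_iff_Ioo unfolding K_def by blast
  ultimately have "norm (integral {a<..<m} (\<lambda>t. K t * \<phi> t)) \<le> integral {a<..<m} (\<lambda>t. M * (K t * \<psi> t))"
    by (intro integral_norm_bound_integral has_integral_integrable[OF K\<psi>]) auto
  also have "\<dots> = M * I"
    by (rule integral_unique[OF K\<psi>])
  finally have "\<bar>integral {a<..<m} (\<lambda>t. K t * \<phi> t)\<bar> \<le> M * I"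
    by simp
  moreover have "frac_right \<alpha> h h' m \<phi> a = integral {a<..<m} (\<lambda>t. K t * \<phi> t) / Gamma \<alpha>"
    by (simp add: frac_right_def K_def integral_open_interval_real)
  ultimately show ?thesis
    using Gamma_real_pos[OF \<alpha>] unfolding abs_divide by (simp add: divide_right_mono)
qed

lemma frac_right_mul_sub_bound:
  fixes h h' g F :: "real \<Rightarrow> real"
  assumes "a < m" and \<alpha>: "\<alpha> > 0" and "D \<noteq> 0"
    and h_mono: "strict_mono_on {a..m} h" and h_cont: "continuous_on {a..m} h"
    and h_deriv: "\<And>t. t \<in> {a<..<m} \<Longrightarrow> (h has_real_derivative h' t) (at t)"
    and h'_cont: "continuous_on {a..m} h'"
    and g_cont: "continuous_on {a..m} g" and g_bound: "\<And>t. t \<in> {a<..<m} \<Longrightarrow> \<bar>g t\<bar> \<le> M"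
    and F_cont: "continuous_on {a..m} F"
    and F_bound: "\<And>t. t \<in> {a<..<m} \<Longrightarrow>
      \<bar>F m - F t\<bar> \<le> chord_integral A B D (h m - h a) - chord_integral A B D (h t - h a)"
  shows "\<bar>F m * frac_right \<alpha> h h' m g a - frac_right \<alpha> h h' m (\<lambda>t. g t * F t) a\<bar>
    \<le> M * weighted_chord_integral \<alpha> A B D (h m - h a) / Gamma \<alpha>"
proof -
  define K where "K t = (h t - h a) powr (\<alpha> - 1) * h' t" for t
  note kernel = frac_right_kernel_has_integral[OF \<open>a < m\<close> \<alpha> \<open>D \<noteq> 0\<close> h_mono h_cont h_deriv]
  have h_pos: "h t > h a" if "t \<in> {a<..<m}" for t
    using strict_mono_onD[OF h_mono, of a t] that by auto
  have K_nonneg: "K t \<ge> 0" if "t \<in> {a<..<m}" for t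
    using deriv_nonneg_if_strict_mono_on[OF h_mono that h_deriv[OF that]] h_pos[OF that]
    by (simp add: K_def)
  have Ioo_sub: "{a<..<m} \<subseteq> {a..m}" by auto
  have K_cont: "continuous_on {a<..<m} K"
    unfolding K_def using h_pos continuous_on_subset[OF h_cont Ioo_sub] continuous_on_subset[OF h'_cont Ioo_sub]
    by (intro continuous_intros continuous_on_powr') force+
  have K_mult_int: "(\<lambda>t. K t * \<phi> t) integrable_on {a..m}" if "continuous_on {a..m} \<phi>" for \<phi>
  proof (rule integrable_kernel_mult[OF _ K_cont K_nonneg that])
    show "K integrable_on {a..m}"
      using kernel(1) unfolding K_def by blast
  qed
  have "F m * frac_right \<alpha> h h' m g a - frac_right \<alpha> h h' m (\<lambda>t. g t * F t) a
      = frac_right \<alpha> h h' m (\<lambda>t. F m * g t - g t * F t) a"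
    unfolding frac_right_cmult using g_cont F_cont
    by (intro frac_right_diff K_mult_int[unfolded K_def] continuous_intros)
  also have "\<bar>\<dots>\<bar> \<le> M * weighted_chord_integral \<alpha> A B D (h m - h a) / Gamma \<alpha>"
  proof (rule abs_frac_right_le[OF \<alpha> K_nonneg[unfolded K_def] K_mult_int[unfolded K_def] kernel(2)])
    show "continuous_on {a..m} (\<lambda>t. F m * g t - g t * F t)"
      using g_cont F_cont by (intro continuous_intros)
    fix t assume t: "t \<in> {a<..<m}"
    have "\<bar>F m * g t - g t * F t\<bar> = \<bar>g t\<bar> * \<bar>F m - F t\<bar>"
      by (simp only: abs_mult[symmetric] algebra_simps)
    also have "\<dots> \<le> M * (chord_integral A B D (h m - h a) - chord_integral A B D (h t - h a))"
      using g_bound[OF t] F_bound[OF t] by (intro mult_mono) auto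
    finally show "\<bar>F m * g t - g t * F t\<bar>
        \<le> M * (chord_integral A B D (h m - h a) - chord_integral A B D (h t - h a))" .
  qed
  finally show ?thesis .
qed

lemma frac_left_mul_sub_bound:
  fixes h h' g F :: "real \<Rightarrow> real"
  assumes "m < b" and \<alpha>: "\<alpha> > 0" and "D \<noteq> 0"
    and h_mono: "strict_mono_on {m..b} h" and h_cont: "continuous_on {m..b} h"
    and h_deriv: "\<And>t. t \<in> {m<..<b} \<Longrightarrow> (h has_real_derivative h' t) (at t)"
    and h'_cont: "continuous_on {m..b} h'"
    and g_cont: "continuous_on {m..b} g" and g_bound: "\<And>t. t \<in> {m<..<b} \<Longrightarrow> \<bar>g t\<bar> \<le> M"
    and F_cont: "continuous_on {m..b} F"
    and F_bound: "\<And>t. t \<in> {m<..<b} \<Longrightarrow>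
      \<bar>F m - F t\<bar> \<le> chord_integral A B D (h b - h m) - chord_integral A B D (h b - h t)"
  shows "\<bar>F m * frac_left \<alpha> h h' m g b - frac_left \<alpha> h h' m (\<lambda>t. g t * F t) b\<bar>
    \<le> M * weighted_chord_integral \<alpha> A B D (h b - h m) / Gamma \<alpha>"
proof -
  have cont_reflect: "continuous_on {- b..- m} (\<lambda>s. \<phi> (- s))"
    if "continuous_on {m..b} \<phi>" for \<phi> :: "real \<Rightarrow> real"
    by (rule continuous_on_compose2[OF that continuous_on_minus[OF continuous_on_id]]) auto
  have "\<bar>F (- (- m)) * frac_right \<alpha> (\<lambda>s. - h (- s)) (\<lambda>s. h' (- s)) (- m) (\<lambda>s. g (- s)) (- b)
         - frac_right \<alpha> (\<lambda>s. - h (- s)) (\<lambda>s. h' (- s)) (- m) (\<lambda>s. g (- s) * F (- s)) (- b)\<bar>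
    \<le> M * weighted_chord_integral \<alpha> A B D (- h (- (- m)) - - h (- (- b))) / Gamma \<alpha>"
  proof (rule frac_right_mul_sub_bound[where F = "\<lambda>s. F (- s)", OF _ \<alpha> \<open>D \<noteq> 0\<close>])
    show "strict_mono_on {- b..- m} (\<lambda>s. - h (- s))"
      using h_mono by (auto simp: strict_mono_on_def)
    fix s assume s: "s \<in> {- b<..<- m}"
    then show "((\<lambda>s. - h (- s)) has_real_derivative h' (- s)) (at s)"
      using h_deriv[of "- s"] by (auto intro!: derivative_eq_intros DERIV_chain2[of h])
    show "\<bar>g (- s)\<bar> \<le> M"
      using g_bound[of "- s"] s by auto
    show "\<bar>F (- (- m)) - F (- s)\<bar> \<le> chord_integral A B D (- h (- (- m)) - - h (- (- b)))
                                   - chord_integral A B D (- h (- s) - - h (- (- b)))"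
      using F_bound[of "- s"] s by auto
  qed (use \<open>m < b\<close> h_cont h'_cont g_cont F_cont in
       \<open>auto intro: cont_reflect continuous_on_minus[OF cont_reflect]\<close>)
  then show ?thesis
    by (simp add: frac_left_reflect)
qed

theorem theorem2p1:
  fixes a b \<alpha> :: real and h h' f g :: "real \<Rightarrow> real" and I :: "real set"
  assumes ab: "a < b" and alpha: "\<alpha> > 0"
    and h_mono: "strict_mono_on {a..b} h"
    and h_deriv: "\<And>x. x \<in> {a..b} \<Longrightarrow> (h has_real_derivative h' x) (at x within {a..b})"
    and h'_cont: "continuous_on {a..b} h'"
    and I_open: "open I" and I_interval: "is_interval I"
    and I_sub: "{h a..h b} \<subseteq> I"
    and f_diff: "\<And>x. x \<in> I \<Longrightarrow> f differentiable (at x)"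
    and f'_int: "deriv f integrable_on {h a..h b}"
    and f'_convex: "convex_on {h a..h b} (\<lambda>x. \<bar>deriv f x\<bar>)"
    and g_cont: "continuous_on {a..b} g"
  shows "let m = (a + b) / 2; D = h b - h a; U = h m - h a; V = h b - h m in
    \<bar>f (h m) * (frac_right \<alpha> h h' m g a + frac_left \<alpha> h h' m g b)
      - (frac_right \<alpha> h h' m (\<lambda>t. g t * f (h t)) a + frac_left \<alpha> h h' m (\<lambda>t. g t * f (h t)) b)\<bar>
    \<le> sup_norm_on g {a..m} / (D * Gamma (\<alpha> + 1)) *
         (\<bar>deriv f (h a)\<bar> * (D * U powr (\<alpha> + 1) / (\<alpha> + 1) - U powr (\<alpha> + 2) / (\<alpha> + 2))
          + \<bar>deriv f (h b)\<bar> * (U powr (\<alpha> + 2) / (\<alpha> + 2)))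
     + sup_norm_on g {m..b} / (D * Gamma (\<alpha> + 1)) *
         (\<bar>deriv f (h b)\<bar> * (D * V powr (\<alpha> + 1) / (\<alpha> + 1) - V powr (\<alpha> + 2) / (\<alpha> + 2))
          + \<bar>deriv f (h a)\<bar> * (V powr (\<alpha> + 2) / (\<alpha> + 2)))"
proof -
  define m where "m = (a + b) / 2"
  define D where "D = h b - h a"
  define A where "A = \<bar>deriv f (h a)\<bar>"
  define B where "B = \<bar>deriv f (h b)\<bar>"
  have am: "a < m" "m < b" using ab by (simp_all add: m_def)
  have D: "D \<noteq> 0" "h a < h b" using strict_mono_onD[OF h_mono, of a b] ab by (auto simp: D_def)
  have h_le: "h s \<le> h t" if "s \<in> {a..b}" "t \<in> {a..b}" "s \<le> t" for s t
    using strict_mono_on_leD[OF h_mono that] .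
  have h_cont: "continuous_on {a..b} h"
    using h_deriv by (rule DERIV_continuous_on)
  have h_deriv_at: "(h has_real_derivative h' t) (at t)" if "t \<in> {a<..<b}" for t
    using h_deriv[of t] that at_within_Icc_at[of a t b] by auto
  have f_diff_range: "f differentiable (at s)" if "s \<in> {h a..h b}" for s
    using I_sub f_diff that by blast
  have f_cont: "continuous_on {h a..h b} f"
    by (intro continuous_at_imp_continuous_on ballI differentiable_imp_continuous_within f_diff_range)
  have fh_cont: "continuous_on {a..b} (\<lambda>t. f (h t))"
    using h_le by (intro continuous_on_compose2[OF f_cont h_cont]) auto
  note sub_cont = continuous_on_subset[OF h_cont] continuous_on_subset[OF h'_cont]
    continuous_on_subset[OF g_cont] continuous_on_subset[OF fh_cont]
  note f_inc = abs_comp_diff_le_chord_integral[OF ab h_mono f_diff_range f'_convex,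
      folded A_def B_def D_def]
  have left: "\<bar>f (h m) * frac_right \<alpha> h h' m g a - frac_right \<alpha> h h' m (\<lambda>t. g t * f (h t)) a\<bar>
      \<le> sup_norm_on g {a..m} * weighted_chord_integral \<alpha> A B D (h m - h a) / Gamma \<alpha>"
    using am h_le f_inc
    by (intro frac_right_mul_sub_bound[OF am(1) alpha D(1)] sup_norm_on_bound sub_cont h_deriv_at)
       (auto simp: strict_mono_on_def intro: strict_mono_onD[OF h_mono])
  have f_inc_right: "\<bar>f (h m) - f (h t)\<bar> \<le> chord_integral B A D (h b - h m) - chord_integral B A D (h b - h t)"
    if "t \<in> {m<..<b}" for t
    using f_inc[of m t] chord_integral_flip[OF D(1), of B A "h m - h a" "h t - h a"] that am
    by (simp add: D_def abs_minus_commute)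
  have right: "\<bar>f (h m) * frac_left \<alpha> h h' m g b - frac_left \<alpha> h h' m (\<lambda>t. g t * f (h t)) b\<bar>
      \<le> sup_norm_on g {m..b} * weighted_chord_integral \<alpha> B A D (h b - h m) / Gamma \<alpha>"
    using am h_le f_inc_right
    by (intro frac_left_mul_sub_bound[OF am(2) alpha D(1)] sup_norm_on_bound sub_cont h_deriv_at)
       (auto simp: strict_mono_on_def intro: strict_mono_onD[OF h_mono])
  show ?thesis
    using abs_triangle_ineq[of "f (h m) * frac_right \<alpha> h h' m g a - frac_right \<alpha> h h' m (\<lambda>t. g t * f (h t)) a"
        "f (h m) * frac_left \<alpha> h h' m g b - frac_left \<alpha> h h' m (\<lambda>t. g t * f (h t)) b"] left right
    unfolding Let_def weighted_chord_integral_Gamma[OF alpha] m_def[symmetric] D_def[symmetric]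
      A_def[symmetric] B_def[symmetric]
    by (simp add: algebra_simps)
qed

end
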